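(* Let $\{\gamma_k\}$ be strictly positive numbers with $\gamma_k\to\infty$, $\{g_k\}$ probability generating functions, $G_k(z)=k\gamma_k[g_k(e^{-z/k})-e^{-z/k}]$ for $z\ge0$, and $v_k(t,\lambda)=-k\log g_k^{[\gamma_kt]}(e^{-\lambda/k})$. Suppose that for every $a\ge0$ the sequence $\{G_k\}$ is uniformly Lipschitz on $[0,a]$ and $G_k\to\phi$ uniformly on $[0,a]$ for some function $\phi$ on $[0,\infty)$. Then for every $a\ge0$, $v_k(t,\lambda)$ converges uniformly on $(t,\lambda)\in[0,a]^2$ to some limit $v_t(\lambda)$, and the limit satisfies $$v_t(\lambda)=\lambda-\int_0^t\phi(v_s(\lambda))\,\mathrm ds,\qquad\lambda,t\ge0.$$
   Context: $g_k^n$ denotes the $n$-fold iterate of $g_k$ with $g_k^0(z)=z$; $[x]$ is the integer part of $x$. *)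

theory Defs
  imports "HOL-Analysis.Analysis"
begin

definition is_pgf :: "(real \<Rightarrow> real) \<Rightarrow> bool" where
  "is_pgf g \<longleftrightarrow> (\<exists>p :: nat \<Rightarrow> real. (\<forall>n. p n \<ge> 0) \<and> p sums 1 \<and>
      (\<forall>s\<in>{0..1}. g s = (\<Sum>n. p n * s ^ n)))"

definition GG :: "(nat \<Rightarrow> real) \<Rightarrow> (nat \<Rightarrow> real \<Rightarrow> real) \<Rightarrow> nat \<Rightarrow> real \<Rightarrow> real" where
  "GG \<gamma> g k z = real k * \<gamma> k * (g k (exp (- z / real k)) - exp (- z / real k))"

definition vv :: "(nat \<Rightarrow> real) \<Rightarrow> (nat \<Rightarrow> real \<Rightarrow> real) \<Rightarrow> nat \<Rightarrow> real \<Rightarrow> real \<Rightarrow> real" where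
  "vv \<gamma> g k t l = - real k * ln ((g k ^^ nat \<lfloor>\<gamma> k * t\<rfloor>) (exp (- l / real k)))"

end

theory Submission
  imports Defs
begin

text \<open>
  Put \<open>S\<^sub>k(u) = -k ln g\<^sub>k(e\<^bsup>-u/k\<^esup>)\<close>, so that \<open>v\<^sub>k(t, \<lambda>)\<close> is the \<open>[\<gamma>\<^sub>k t]\<close>-th iterate of
  \<open>S\<^sub>k\<close> at \<open>\<lambda>\<close>. Expanding the logarithm, \<open>S\<^sub>k(u) = u - G\<^sub>k(u)/\<gamma>\<^sub>k + o(1/\<gamma>\<^sub>k)\<close> uniformly for
  bounded \<open>u\<close>, so \<open>v\<^sub>k(\<cdot>, \<lambda>)\<close> is an Euler scheme with step \<open>1/\<gamma>\<^sub>k\<close> for \<open>v' = -G\<^sub>k(v)\<close>,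
  \<open>v(0) = \<lambda>\<close>, i.e. \<open>v\<^sub>k(t, \<lambda>) \<approx> \<lambda> - \<integral>\<^sub>0\<^sup>t G\<^sub>k(v\<^sub>k(s, \<lambda>)) ds\<close>. Convexity of \<open>g\<^sub>k\<close> turns the
  Lipschitz bound near \<open>0\<close> into a linear lower bound \<open>G\<^sub>k(z) \<ge> -c z\<close>, which keeps the scheme
  bounded on \<open>[0, a]\<^sup>2\<close>. On that bounded range Gronwall's inequality, the uniform Lipschitz
  bound and the uniform convergence \<open>G\<^sub>k \<rightarrow> \<phi>\<close> make \<open>(v\<^sub>k)\<close> uniformly Cauchy, and the
  integral equation follows by letting \<open>k \<rightarrow> \<infinity>\<close> in the approximate one.
\<close>

section \<open>Probability generating functions\<close>

lemma is_pgf_sums: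
  assumes "is_pgf g"
  shows "\<exists>p. (\<forall>n. p n \<ge> 0) \<and> p sums 1 \<and> (\<forall>s\<in>{0..1}. (\<lambda>n. p n * s ^ n) sums g s)"
proof -
  obtain p where p: "\<forall>n. p n \<ge> 0" "p sums 1" "\<forall>s\<in>{0..1}. g s = (\<Sum>n. p n * s ^ n)"
    using assms unfolding is_pgf_def by blast
  have "(\<lambda>n. p n * s ^ n) sums g s" if s: "s \<in> {0..1}" for s
  proof -
    have "summable (\<lambda>n. p n * s ^ n)"
    proof (rule summable_comparison_test)
      show "\<exists>N. \<forall>n\<ge>N. norm (p n * s ^ n) \<le> p n"
        using p(1) s by (auto intro!: mult_left_le simp: abs_mult power_le_one)
      show "summable p"
        using p(2) by (simp add: sums_iff)
    qed
    then show ?thesis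
      using p(3) s by (simp add: summable_sums)
  qed
  with p show ?thesis by blast
qed

lemma pgf_one:
  assumes "is_pgf g"
  shows "g 1 = 1"
proof -
  obtain p where p: "p sums 1" "\<forall>s\<in>{0..1}. (\<lambda>n. p n * s ^ n) sums g s"
    using is_pgf_sums[OF assms] by blast
  have "p sums g 1"
    using p(2)[rule_format, of 1] by simp
  then show ?thesis
    using sums_unique2[OF p(1)] by simp
qed

lemma pgf_le_one:
  assumes "is_pgf g" "s \<in> {0..1}"
  shows "g s \<le> 1"
proof -
  obtain p where p: "\<forall>n. p n \<ge> 0" "p sums 1" "(\<lambda>n. p n * s ^ n) sums g s"
    using is_pgf_sums[OF assms(1)] assms(2) by blast
  have "p n * s ^ n \<le> p n" for n
    using p(1) assms(2) by (simp add: mult_left_le power_le_one)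
  then show ?thesis
    using sums_le[OF _ p(3) p(2)] by blast
qed

lemma pgf_pos:
  assumes "is_pgf g" "s \<in> {0<..1}"
  shows "g s > 0"
proof -
  obtain p where p: "\<forall>n. p n \<ge> 0" "p sums 1" "(\<lambda>n. p n * s ^ n) sums g s"
    using is_pgf_sums[OF assms(1)] assms(2) by fastforce
  have "\<exists>n. p n \<noteq> 0"
  proof (rule ccontr)
    assume "\<not> ?thesis"
    then have "p = (\<lambda>n. 0)" by auto
    with p(2) show False
      using sums_unique2 sums_zero by fastforce
  qed
  then obtain n where n: "p n > 0"
    using p(1) by (metis less_eq_real_def)
  have "p n * s ^ n \<le> g s"
    using sum_le_suminf[of "\<lambda>n. p n * s ^ n" "{n}"] p(1,3) assms(2) by (auto simp: sums_iff)
  moreover have "p n * s ^ n > 0"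
    using n assms(2) by simp
  ultimately show ?thesis by linarith
qed

text \<open>The chord slope \<open>(1 - g s) / (1 - s)\<close> is the series \<open>\<Sum>n. p n * (1 + s + \<dots> + s ^ (n - 1))\<close>,
  hence increasing in \<open>s\<close>.\<close>
lemma pgf_chord_slope_mono:
  assumes "is_pgf g" "0 \<le> s" "s \<le> s0" "s0 < 1"
  shows "(1 - g s) / (1 - s) \<le> (1 - g s0) / (1 - s0)"
proof -
  obtain p where p: "\<forall>n. p n \<ge> 0" "p sums 1" "\<forall>s\<in>{0..1}. (\<lambda>n. p n * s ^ n) sums g s"
    using is_pgf_sums[OF assms(1)] by blast
  have slope_sums: "(\<lambda>n. p n * (\<Sum>i<n. x ^ i)) sums ((1 - g x) / (1 - x))"
    if "0 \<le> x" "x < 1" for x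
  proof -
    have "(\<lambda>n. (p n - p n * x ^ n) / (1 - x)) sums ((1 - g x) / (1 - x))"
      using sums_divide[OF sums_diff[OF p(2) p(3)[rule_format, of x]]] that by simp
    moreover have "(p n - p n * x ^ n) / (1 - x) = p n * (\<Sum>i<n. x ^ i)" for n
    proof -
      have "(\<Sum>i<n. x ^ i) = (1 - x ^ n) / (1 - x)"
        using that one_diff_power_eq[of x n] by auto
      then show ?thesis
        by (simp add: right_diff_distrib)
    qed
    ultimately show ?thesis by simp
  qed
  show ?thesis
  proof (rule sums_le[OF _ slope_sums slope_sums])
    show "p n * (\<Sum>i<n. s ^ i) \<le> p n * (\<Sum>i<n. s0 ^ i)" for n
      using assms p(1) by (intro mult_left_mono sum_mono power_mono) auto
  qed (use assms in auto)
qed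

section \<open>A linear lower bound for \<open>GG\<close>\<close>

lemma one_minus_exp_le: "1 - exp (- y) \<le> (y::real)"
  using exp_ge_add_one_self[of "- y"] by simp

lemma one_minus_exp_ge:
  assumes "y \<ge> 0"
  shows "y * exp (- y) \<le> 1 - exp (- (y::real))"
proof -
  have "(y + 1) * exp (- y) \<le> exp y * exp (- y)"
    using exp_ge_add_one_self[of y] by (intro mult_right_mono) (auto simp: add.commute)
  then show ?thesis
    by (simp add: exp_minus_inverse algebra_simps)
qed

lemma one_minus_exp_ratio_le:
  fixes h K z :: real
  assumes "0 < h" "h \<le> K" "0 \<le> z"
  shows "(1 - exp (- z / K)) * h / (1 - exp (- h / K)) \<le> exp 1 * z"
proof -
  have K: "K > 0" using assms by linarith
  have den: "0 < 1 - exp (- h / K)"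
    using assms K by simp
  have "h / K * exp (- 1) \<le> h / K * exp (- (h / K))"
    using assms K by (intro mult_left_mono) auto
  also have "\<dots> \<le> 1 - exp (- h / K)"
    using one_minus_exp_ge[of "h / K"] assms K by simp
  finally have "h / K * exp (- 1) \<le> 1 - exp (- h / K)" .
  then have "h / K * exp (- 1) * exp 1 \<le> (1 - exp (- h / K)) * exp 1"
    by (rule mult_right_mono) simp
  moreover have "h / K * exp (- 1) * exp 1 = h / K"
    by (simp add: mult.assoc flip: exp_add)
  ultimately have "h / K \<le> (1 - exp (- h / K)) * exp 1"
    by linarith
  then have "h \<le> exp 1 * K * (1 - exp (- h / K))"
    using K by (simp add: pos_divide_le_eq mult_ac)
  then have "h / (1 - exp (- h / K)) \<le> exp 1 * K"
    using den by (simp add: pos_divide_le_eq)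
  moreover have "1 - exp (- z / K) \<le> z / K"
    using one_minus_exp_le[of "z / K"] by simp
  moreover have "0 \<le> 1 - exp (- z / K)"
    using assms K by simp
  ultimately have "(1 - exp (- z / K)) * (h / (1 - exp (- h / K))) \<le> z / K * (exp 1 * K)"
    using assms den by (intro mult_mono) auto
  then show ?thesis
    using K by (simp add: mult.commute)
qed

lemma GG_zero:
  fixes g :: "nat \<Rightarrow> real \<Rightarrow> real"
  assumes "is_pgf (g k)"
  shows "GG \<gamma> g k 0 = 0"
  using assms by (simp add: GG_def pgf_one)

lemma GG_ge_chord_ratio:
  assumes pgf: "is_pgf (g k)" and k: "k \<ge> 1" and \<gamma>: "\<gamma> k > 0" and h: "0 < h" "h \<le> z"
  shows "(1 - exp (- z / k)) / (1 - exp (- h / k)) * GG \<gamma> g k h \<le> GG \<gamma> g k z"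
proof -
  define s where "s = exp (- z / k)"
  define s0 where "s0 = exp (- h / k)"
  have s: "0 \<le> s" "s \<le> s0" and s0: "s0 < 1"
    using h k by (auto simp: s_def s0_def divide_right_mono)
  have "(1 - s) / (1 - s0) * (g k s0 - s0) = (1 - s) * (1 - (1 - g k s0) / (1 - s0))"
    using s0 by (simp add: field_simps)
  also have "\<dots> \<le> (1 - s) * (1 - (1 - g k s) / (1 - s))"
    using pgf_chord_slope_mono[OF pgf s s0] s s0 by (intro mult_left_mono) auto
  also have "\<dots> = g k s - s"
    using s s0 by (simp add: field_simps)
  finally have "real k * \<gamma> k * ((1 - s) / (1 - s0) * (g k s0 - s0)) \<le> real k * \<gamma> k * (g k s - s)"
    using \<gamma> by (intro mult_left_mono) auto
  then show ?thesis
    by (simp add: GG_def s_def s0_def mult_ac)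
qed

text \<open>Convexity of \<open>g k\<close> propagates a lower bound for \<open>GG\<close> near \<open>0\<close> to all of \<open>[0, \<infinity>)\<close>.\<close>
lemma GG_lower_bound:
  assumes pgf: "is_pgf (g k)" and k: "k \<ge> 1" and \<gamma>: "\<gamma> k > 0" and L: "L \<ge> 0"
    and near0: "\<And>h. h \<in> {0..1} \<Longrightarrow> GG \<gamma> g k h \<ge> - L * h"
    and z: "z \<ge> 0"
  shows "GG \<gamma> g k z \<ge> - (exp 1 * L) * z"
proof (cases "z = 0")
  case True
  then show ?thesis
    using GG_zero[of g k, OF pgf] by simp
next
  case False
  define h where "h = min z 1"
  define r where "r = (1 - exp (- z / k)) / (1 - exp (- h / k))"
  have h: "0 < h" "h \<le> z" "h \<le> 1" "h \<le> real k"
    using False z k by (auto simp: h_def)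
  have r: "r \<ge> 0"
    using h z k by (simp add: r_def divide_nonneg_pos)
  have "r * h \<le> exp 1 * z"
    using one_minus_exp_ratio_le[OF h(1,4) z] by (simp add: r_def)
  then have "L * (r * h) \<le> L * (exp 1 * z)"
    using L by (rule mult_left_mono)
  then have "- (exp 1 * L) * z \<le> r * (- L * h)"
    by (simp add: algebra_simps)
  also have "\<dots> \<le> r * GG \<gamma> g k h"
    using near0 h r by (intro mult_left_mono) auto
  also have "\<dots> \<le> GG \<gamma> g k z"
    using GG_ge_chord_ratio[of g k \<gamma>, OF pgf k \<gamma> h(1,2)] by (simp add: r_def)
  finally show ?thesis .
qed

section \<open>One step of the iteration\<close>

definition log_step :: "(nat \<Rightarrow> real \<Rightarrow> real) \<Rightarrow> nat \<Rightarrow> real \<Rightarrow> real" where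
  "log_step g k u = - real k * ln (g k (exp (- u / real k)))"

lemma pgf_iterate_eq_exp_log_step:
  assumes pgf: "is_pgf (g k)" and k: "k \<ge> 1" and l: "l \<ge> 0"
  shows "(g k ^^ n) (exp (- l / k)) = exp (- (log_step g k ^^ n) l / k) \<and> (log_step g k ^^ n) l \<ge> 0"
proof (induction n)
  case 0
  then show ?case
    using l by simp
next
  case (Suc n)
  define u where "u = (log_step g k ^^ n) l"
  have "exp (- u / k) \<in> {0<..1}"
    using Suc k by (simp add: u_def)
  then have g: "0 < g k (exp (- u / k))" "g k (exp (- u / k)) \<le> 1"
    using pgf_pos[OF pgf] pgf_le_one[OF pgf] by auto
  have "exp (- log_step g k u / k) = g k (exp (- u / k))"
    using g k by (simp add: log_step_def)
  moreover have "log_step g k u \<ge> 0"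
    using g by (simp add: log_step_def mult_nonneg_nonpos)
  ultimately show ?case
    using Suc by (simp add: u_def)
qed

lemma vv_eq_log_step_iterate:
  assumes "is_pgf (g k)" "k \<ge> 1" "l \<ge> 0"
  shows "vv \<gamma> g k t l = (log_step g k ^^ nat \<lfloor>\<gamma> k * t\<rfloor>) l"
  using pgf_iterate_eq_exp_log_step[of g k, OF assms, of "nat \<lfloor>\<gamma> k * t\<rfloor>"] assms(2)
  by (simp add: vv_def)

text \<open>The point of \<open>x\<close> is that \<open>g\<^sub>k(e\<^bsup>-u/k\<^esup>) = e\<^bsup>-u/k\<^esup> (1 + x)\<close>.\<close>
lemma log_step_eq_ln:
  assumes pgf: "is_pgf (g k)" and k: "k \<ge> 1" and \<gamma>: "\<gamma> k > 0" and u: "u \<ge> 0"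
  defines "x \<equiv> exp (u / k) * GG \<gamma> g k u / (k * \<gamma> k)"
  shows "1 + x > 0" and "log_step g k u = u - k * ln (1 + x)"
proof -
  define s where "s = exp (- u / k)"
  have s: "s > 0" "s * exp (u / k) = 1"
    by (simp_all add: s_def flip: exp_add)
  have "g k s = s + GG \<gamma> g k u / (k * \<gamma> k)"
    using \<gamma> k by (simp add: GG_def s_def)
  also have "\<dots> = s * (1 + x)"
    using s by (simp add: x_def algebra_simps)
  finally have gs: "g k s = s * (1 + x)" .
  moreover have "g k s > 0"
    using pgf_pos[OF pgf] u k by (simp add: s_def)
  ultimately show x: "1 + x > 0"
    using s by (simp add: zero_less_mult_iff)
  have "ln (g k s) = - u / k + ln (1 + x)"
    using gs s x by (simp add: ln_mult s_def)
  then have "k * ln (g k s) = - u + k * ln (1 + x)"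
    using k by (simp add: right_diff_distrib)
  then show "log_step g k u = u - k * ln (1 + x)"
    by (simp add: log_step_def s_def)
qed

lemma abs_exp_GG_ratio_le:
  assumes k: "k \<ge> 1" and \<gamma>: "\<gamma> k > 0" and u: "0 \<le> u" "u \<le> k" and M: "\<bar>GG \<gamma> g k u\<bar> \<le> M"
  shows "\<bar>exp (u / k) * GG \<gamma> g k u / (k * \<gamma> k)\<bar> \<le> exp 1 * M / (k * \<gamma> k)"
proof -
  have "exp (u / k) \<le> exp 1"
    using u k by (simp add: divide_le_eq)
  then have "exp (u / k) * \<bar>GG \<gamma> g k u\<bar> \<le> exp 1 * M"
    using M by (intro mult_mono) auto
  then show ?thesis
    using k \<gamma> by (simp add: abs_mult divide_right_mono)
qed

lemma log_step_error:
  assumes pgf: "is_pgf (g k)" and k: "k \<ge> 1" and \<gamma>: "\<gamma> k > 0" and u: "0 \<le> u" "u \<le> k"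
    and M: "\<bar>GG \<gamma> g k u\<bar> \<le> M" and small: "exp 1 * M / (k * \<gamma> k) \<le> 1/2"
  shows "\<bar>log_step g k u - u + GG \<gamma> g k u / \<gamma> k\<bar>
           \<le> 2 * (exp 1 * M)^2 / (k * \<gamma> k ^ 2) + M * (exp (u / k) - 1) / \<gamma> k"
proof -
  define G where "G = GG \<gamma> g k u"
  define x where "x = exp (u / k) * G / (k * \<gamma> k)"
  have xb: "\<bar>x\<bar> \<le> exp 1 * M / (k * \<gamma> k)"
    using abs_exp_GG_ratio_le[of k \<gamma>, OF k \<gamma> u M] by (simp add: x_def G_def)
  have "log_step g k u - u + G / \<gamma> k = - (k * (ln (1 + x) - x)) - (exp (u / k) - 1) * G / \<gamma> k"
    using log_step_eq_ln(2)[of g k \<gamma>, OF pgf k \<gamma> u(1)] k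
    by (simp add: x_def G_def algebra_simps diff_divide_distrib)
  moreover have "\<bar>k * (ln (1 + x) - x)\<bar> \<le> 2 * (exp 1 * M)^2 / (k * \<gamma> k ^ 2)"
  proof -
    have "\<bar>x\<bar> \<le> 1/2"
      using xb small by linarith
    then have "\<bar>k * (ln (1 + x) - x)\<bar> \<le> k * (2 * x^2)"
      using abs_ln_one_plus_x_minus_x_bound[of x] by (simp add: abs_mult mult_left_mono)
    also have "\<dots> \<le> k * (2 * (exp 1 * M / (k * \<gamma> k))^2)"
      using power_mono[OF xb abs_ge_zero, of 2] k by (intro mult_left_mono) auto
    also have "\<dots> = 2 * (exp 1 * M)^2 / (k * \<gamma> k ^ 2)"
      using k \<gamma> by (simp add: power2_eq_square field_simps)
    finally show ?thesis .
  qed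
  moreover have "\<bar>(exp (u / k) - 1) * G / \<gamma> k\<bar> \<le> M * (exp (u / k) - 1) / \<gamma> k"
    using M u k \<gamma> by (simp add: G_def abs_mult mult.commute divide_right_mono mult_right_mono)
  ultimately show ?thesis
    unfolding G_def by linarith
qed

lemma log_step_upper:
  assumes pgf: "is_pgf (g k)" and k: "k \<ge> 1" and \<gamma>: "\<gamma> k > 0" and u: "0 \<le> u" "u \<le> k"
    and M: "\<bar>GG \<gamma> g k u\<bar> \<le> M" and small: "exp 1 * M / (k * \<gamma> k) \<le> 1/2"
    and c: "c \<ge> 0" "GG \<gamma> g k u \<ge> - c * u"
  shows "log_step g k u \<le> u + 2 * exp 1 * c * u / \<gamma> k"
proof -
  define G where "G = GG \<gamma> g k u"
  define x where "x = exp (u / k) * G / (k * \<gamma> k)"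
  have step: "log_step g k u = u - k * ln (1 + x)"
    using log_step_eq_ln(2)[of g k \<gamma>, OF pgf k \<gamma> u(1)] by (simp add: x_def G_def)
  show ?thesis
  proof (cases "G \<ge> 0")
    case True
    then have "ln (1 + x) \<ge> 0"
      using k \<gamma> by (simp add: x_def)
    then have "0 \<le> k * ln (1 + x)"
      by simp
    moreover have "0 \<le> 2 * exp 1 * c * u / \<gamma> k"
      using c u \<gamma> by simp
    ultimately show ?thesis
      using step by linarith
  next
    case False
    have "\<bar>x\<bar> \<le> exp 1 * M / (k * \<gamma> k)"
      using abs_exp_GG_ratio_le[of k \<gamma>, OF k \<gamma> u M] by (simp add: x_def G_def)
    then have xb: "\<bar>x\<bar> \<le> 1/2"
      using small by linarith
    have x: "x < 0"
      using False k \<gamma> by (simp add: x_def mult_pos_neg divide_neg_pos)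
    have "\<bar>x\<bar> * \<bar>x\<bar> \<le> 1/2 * \<bar>x\<bar>"
      by (rule mult_right_mono[OF xb abs_ge_zero])
    then have "2 * x\<^sup>2 \<le> - x"
      using x by (simp add: power2_eq_square abs_mult_self_eq)
    then have "ln (1 + x) \<ge> 2 * x"
      using abs_ln_one_plus_x_minus_x_bound[OF xb] by (simp add: abs_le_iff)
    then have "log_step g k u \<le> u - 2 * (k * x)"
      using step k by (simp add: mult_left_mono)
    also have "k * x = exp (u / k) * G / \<gamma> k"
      using k by (simp add: x_def)
    also have "- (exp (u / k) * G) \<le> exp 1 * (c * u)"
      using c u k False by (intro order.trans[OF _ mult_mono[of "exp (u / k)" "exp 1" "- G" "c * u"]])
        (auto simp: G_def divide_le_eq)
    then have "u - 2 * (exp (u / k) * G / \<gamma> k) \<le> u + 2 * exp 1 * c * u / \<gamma> k"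
      using \<gamma> divide_right_mono[of _ _ "\<gamma> k"] by fastforce
    finally show ?thesis .
  qed
qed

section \<open>Step functions, uniform limits and Gronwall\<close>

lemma nat_floor_mult_eq:
  assumes "c > 0" "real m \<le> c * s" "c * s < real m + 1"
  shows "nat \<lfloor>c * s\<rfloor> = m"
proof -
  have "\<lfloor>c * s\<rfloor> = int m"
    using assms by (simp add: floor_eq_iff)
  then show ?thesis
    by simp
qed

lemma nat_floor_mult_bounds:
  fixes c t :: real
  assumes c: "c > 0" and t: "t \<ge> 0"
  shows "real (nat \<lfloor>c * t\<rfloor>) \<le> c * t" and "t - real (nat \<lfloor>c * t\<rfloor>) / c \<in> {0..1 / c}"
proof -
  define n where "n = nat \<lfloor>c * t\<rfloor>"
  have fl: "\<lfloor>c * t\<rfloor> \<ge> 0"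
    using c t by simp
  then show n: "real (nat \<lfloor>c * t\<rfloor>) \<le> c * t"
    by simp
  have "c * t \<le> real n + 1"
    using fl by (simp add: n_def)
  then have "t \<le> real n / c + 1 / c"
    using c by (simp add: pos_le_divide_eq mult.commute flip: add_divide_distrib)
  moreover have "real n / c \<le> t"
    using n c by (simp add: n_def pos_divide_le_eq mult.commute)
  ultimately show "t - real (nat \<lfloor>c * t\<rfloor>) / c \<in> {0..1 / c}"
    by (simp add: n_def)
qed

lemma has_integral_floor_step_grid:
  assumes c: "c > (0::real)"
  shows "((\<lambda>s. H (nat \<lfloor>c * s\<rfloor>)) has_integral ((\<Sum>j<m. H j) / c)) {0..real m / c}"
proof (induction m)
  case 0
  then show ?case
    by (simp add: has_integral_refl)
next
  case (Suc m)
  have "((\<lambda>s. H (nat \<lfloor>c * s\<rfloor>)) has_integral (H m / c)) {real m / c..real (Suc m) / c}"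
  proof (rule has_integral_spike_finite[where S = "{real (Suc m) / c}" and f = "\<lambda>s. H m"])
    fix s
    assume "s \<in> {real m / c..real (Suc m) / c} - {real (Suc m) / c}"
    then have "real m \<le> c * s" "c * s < real m + 1"
      using c by (auto simp: field_simps)
    then show "H (nat \<lfloor>c * s\<rfloor>) = H m"
      using nat_floor_mult_eq[OF c] by simp
  next
    show "((\<lambda>s. H m) has_integral (H m / c)) {real m / c..real (Suc m) / c}"
      using has_integral_const_real[of "H m" "real m / c" "real (Suc m) / c"] c
      by (simp add: field_simps)
  qed simp
  then have "((\<lambda>s. H (nat \<lfloor>c * s\<rfloor>)) has_integral ((\<Sum>j<m. H j) / c + H m / c)) {0..real (Suc m) / c}"
    using c by (intro has_integral_combine[OF _ _ Suc]) (auto simp: divide_right_mono)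
  then show ?case
    by (simp add: add_divide_distrib)
qed

lemma has_integral_floor_step:
  assumes c: "c > (0::real)" and t: "t \<ge> 0"
  shows "((\<lambda>s. H (nat \<lfloor>c * s\<rfloor>)) has_integral
          ((\<Sum>j<nat \<lfloor>c * t\<rfloor>. H j) / c + (t - real (nat \<lfloor>c * t\<rfloor>) / c) * H (nat \<lfloor>c * t\<rfloor>))) {0..t}"
proof -
  define n where "n = nat \<lfloor>c * t\<rfloor>"
  have n: "real n \<le> c * t" and nt: "real n / c \<le> t" and tn: "c * t < real n + 1"
    using nat_floor_mult_bounds[OF c t] c t by (auto simp: n_def)
  have "((\<lambda>s. H (nat \<lfloor>c * s\<rfloor>)) has_integral ((t - real n / c) * H n)) {real n / c..t}"
  proof (rule has_integral_spike_finite[where S = "{}" and f = "\<lambda>s. H n"])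
    fix s
    assume s: "s \<in> {real n / c..t} - {}"
    then have "real n \<le> c * s" "c * s \<le> c * t"
      using c by (auto simp: field_simps)
    with tn have "real n \<le> c * s" "c * s < real n + 1"
      by linarith+
    then show "H (nat \<lfloor>c * s\<rfloor>) = H n"
      using nat_floor_mult_eq[OF c] by simp
  next
    show "((\<lambda>s. H n) has_integral ((t - real n / c) * H n)) {real n / c..t}"
      using has_integral_const_real[of "H n" "real n / c" t] nt by simp
  qed simp
  then have "((\<lambda>s. H (nat \<lfloor>c * s\<rfloor>)) has_integral ((\<Sum>j<n. H j) / c + (t - real n / c) * H n)) {0..t}"
    using c by (intro has_integral_combine[OF _ nt has_integral_floor_step_grid[OF c]]) simp
  then show ?thesis
    by (simp add: n_def)
qed

lemma floor_step_integrable: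
  fixes c t :: real and H :: "nat \<Rightarrow> real"
  assumes "c > 0" "t \<ge> 0"
  shows "(\<lambda>s. H (nat \<lfloor>c * s\<rfloor>)) integrable_on {0..t}"
  using has_integral_floor_step[OF assms] by blast

lemma has_integral_gronwall_majorant:
  fixes L \<delta> M t :: real
  assumes "t \<ge> 0"
  shows "((\<lambda>s. L * (\<delta> * exp (L * s) + M * ((L * s) ^ n / fact n))) has_integral
           (\<delta> * exp (L * t) + M * ((L * t) ^ Suc n / fact (Suc n)) - \<delta>)) {0..t}"
proof -
  define F where "F s = \<delta> * exp (L * s) + M * ((L * s) ^ Suc n / fact (Suc n))" for s
  have "(F has_real_derivative L * (\<delta> * exp (L * s) + M * ((L * s) ^ n / fact n))) (at s)" for s
    unfolding F_def
    by (rule derivative_eq_intros refl | simp)+ (simp add: algebra_simps fact_Suc power_mult_distrib)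
  then have "((\<lambda>s. L * (\<delta> * exp (L * s) + M * ((L * s) ^ n / fact n))) has_integral (F t - F 0)) {0..t}"
    using assms by (intro fundamental_theorem_of_calculus)
      (auto simp: has_real_derivative_iff_has_vector_derivative has_vector_derivative_at_within)
  then show ?thesis
    by (simp add: F_def)
qed

text \<open>Iterating the integral inequality \<open>n\<close> times gives
  \<open>f t \<le> \<delta> e\<^bsup>L t\<^esup> + M (L t)\<^sup>n / n!\<close>; let \<open>n \<rightarrow> \<infinity>\<close>.\<close>
lemma gronwall_integral_le:
  fixes f :: "real \<Rightarrow> real"
  assumes a: "a \<ge> 0" and L: "L \<ge> 0" and \<delta>: "\<delta> \<ge> 0"
    and int: "\<And>t. t \<in> {0..a} \<Longrightarrow> f integrable_on {0..t}"
    and bnd: "\<And>s. s \<in> {0..a} \<Longrightarrow> 0 \<le> f s \<and> f s \<le> M"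
    and ineq: "\<And>t. t \<in> {0..a} \<Longrightarrow> f t \<le> \<delta> + L * integral {0..t} f"
    and t: "t \<in> {0..a}"
  shows "f t \<le> \<delta> * exp (L * t)"
proof -
  have iterate: "\<forall>t\<in>{0..a}. f t \<le> \<delta> * exp (L * t) + M * ((L * t) ^ n / fact n)" for n
  proof (induction n)
    case 0
    show ?case
      using bnd \<delta> by (auto intro: add_increasing)
  next
    case (Suc n)
    show ?case
    proof
      fix t assume t: "t \<in> {0..a}"
      have maj: "((\<lambda>s. L * (\<delta> * exp (L * s) + M * ((L * s) ^ n / fact n))) has_integral
           (\<delta> * exp (L * t) + M * ((L * t) ^ Suc n / fact (Suc n)) - \<delta>)) {0..t}"
        using t by (intro has_integral_gronwall_majorant) simp
      have "L * integral {0..t} f = integral {0..t} (\<lambda>s. L * f s)"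
        by simp
      also have "\<dots> \<le> integral {0..t} (\<lambda>s. L * (\<delta> * exp (L * s) + M * ((L * s) ^ n / fact n)))"
      proof (rule integral_le)
        show "(\<lambda>s. L * f s) integrable_on {0..t}"
          using integrable_on_cmult_left[OF int[OF t], of L] by simp
        show "(\<lambda>s. L * (\<delta> * exp (L * s) + M * ((L * s) ^ n / fact n))) integrable_on {0..t}"
          using maj by blast
        fix s assume "s \<in> {0..t}"
        then have "s \<in> {0..a}"
          using t by auto
        then show "L * f s \<le> L * (\<delta> * exp (L * s) + M * ((L * s) ^ n / fact n))"
          using Suc L by (auto intro: mult_left_mono)
      qed
      also have "\<dots> = \<delta> * exp (L * t) + M * ((L * t) ^ Suc n / fact (Suc n)) - \<delta>"
        by (rule integral_unique[OF maj])
      finally show "f t \<le> \<delta> * exp (L * t) + M * ((L * t) ^ Suc n / fact (Suc n))"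
        using ineq[OF t] by linarith
    qed
  qed
  have "(\<lambda>n. (L * t) ^ n / fact n) \<longlonglongrightarrow> 0"
    using summable_LIMSEQ_zero[OF summable_exp[of "L * t"]] by (simp add: divide_inverse mult.commute)
  then have "(\<lambda>n. \<delta> * exp (L * t) + M * ((L * t) ^ n / fact n)) \<longlonglongrightarrow> \<delta> * exp (L * t) + M * 0"
    by (intro tendsto_intros)
  then show ?thesis
    using LIMSEQ_le_const[of _ "\<delta> * exp (L * t)" "f t"] iterate t by auto
qed

lemma integrable_uniform_limit_sequentially:
  fixes f :: "nat \<Rightarrow> real \<Rightarrow> real"
  assumes lim: "uniform_limit {a..b} f g sequentially"
    and int: "eventually (\<lambda>k. f k integrable_on {a..b}) sequentially"
  shows "g integrable_on {a..b}"
proof (rule integrable_uniform_limit_real, goal_cases)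
  case (1 e)
  with lim int have "eventually (\<lambda>k. (\<forall>x\<in>{a..b}. dist (f k x) (g x) < e) \<and> f k integrable_on {a..b}) sequentially"
    by (intro eventually_conj uniform_limitD)
  then obtain k where "\<forall>x\<in>{a..b}. dist (f k x) (g x) < e" "f k integrable_on {a..b}"
    by (auto simp: eventually_sequentially)
  then show ?case
    by (intro exI[of _ "f k"]) (auto simp: dist_real_def abs_minus_commute less_imp_le)
qed

lemma integral_uniform_limit_sequentially:
  fixes f :: "nat \<Rightarrow> real \<Rightarrow> real"
  assumes lim: "uniform_limit {a..b} f g sequentially"
    and int: "eventually (\<lambda>k. f k integrable_on {a..b}) sequentially"
  shows "(\<lambda>k. integral {a..b} (f k)) \<longlonglongrightarrow> integral {a..b} g"
proof (rule tendstoI)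
  fix e :: real
  assume e: "e > 0"
  define c where "c = \<bar>b - a\<bar> + 1"
  have c: "c > 0"
    by (simp add: c_def add_nonneg_pos)
  have g: "g integrable_on {a..b}"
    by (rule integrable_uniform_limit_sequentially[OF lim int])
  show "eventually (\<lambda>k. dist (integral {a..b} (f k)) (integral {a..b} g) < e) sequentially"
    using uniform_limitD[OF lim divide_pos_pos[OF e c]] int
  proof eventually_elim
    case (elim k)
    have "norm (integral {a..b} (\<lambda>x. f k x - g x)) \<le> integral {a..b} (\<lambda>x. e / c)"
      using elim by (intro integral_norm_bound_integral integrable_diff g)
        (auto simp: dist_real_def less_imp_le)
    also have "\<dots> < e"
      using e c by (cases "a \<le> b") (auto simp: c_def content_real_if field_simps)
    finally show ?case
      using elim(2) g by (simp add: dist_real_def integral_diff)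
  qed
qed

lemma abs_integrable_of_bounded:
  fixes f :: "real \<Rightarrow> real"
  assumes "f integrable_on {a..b}" "\<And>x. x \<in> {a..b} \<Longrightarrow> \<bar>f x\<bar> \<le> M"
  shows "(\<lambda>x. \<bar>f x\<bar>) integrable_on {a..b}"
proof -
  have "f absolutely_integrable_on {a..b}"
    using assms by (intro absolutely_integrable_integrable_bound[where g = "\<lambda>_. M"]) auto
  then show ?thesis
    by (simp add: absolutely_integrable_on_def)
qed

section \<open>The rescaled iterates\<close>

locale pgf_rescaling =
  fixes \<gamma> :: "nat \<Rightarrow> real" and g :: "nat \<Rightarrow> real \<Rightarrow> real" and \<phi> :: "real \<Rightarrow> real"
  assumes gamma_pos: "\<And>k. \<gamma> k > 0"
    and gamma_lim: "filterlim \<gamma> at_top sequentially"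
    and pgf: "\<And>k. is_pgf (g k)"
    and lip: "\<And>a. a \<ge> 0 \<Longrightarrow> \<exists>L. \<forall>k\<ge>1. \<forall>x\<in>{0..a}. \<forall>y\<in>{0..a}.
                 \<bar>GG \<gamma> g k x - GG \<gamma> g k y\<bar> \<le> L * \<bar>x - y\<bar>"
    and conv: "\<And>a. a \<ge> 0 \<Longrightarrow> uniform_limit {0..a} (GG \<gamma> g) \<phi> sequentially"
begin

definition lip_const :: "real \<Rightarrow> real" where
  "lip_const a = max 0 (SOME L. \<forall>k\<ge>1. \<forall>x\<in>{0..a}. \<forall>y\<in>{0..a}.
                 \<bar>GG \<gamma> g k x - GG \<gamma> g k y\<bar> \<le> L * \<bar>x - y\<bar>)"

lemma lip_const_nonneg: "lip_const a \<ge> 0"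
  by (simp add: lip_const_def)

lemma GG_lipschitz:
  assumes "a \<ge> 0" "k \<ge> 1" "x \<in> {0..a}" "y \<in> {0..a}"
  shows "\<bar>GG \<gamma> g k x - GG \<gamma> g k y\<bar> \<le> lip_const a * \<bar>x - y\<bar>"
proof -
  let ?P = "\<lambda>L. \<forall>k\<ge>1. \<forall>x\<in>{0..a}. \<forall>y\<in>{0..a}. \<bar>GG \<gamma> g k x - GG \<gamma> g k y\<bar> \<le> L * \<bar>x - y\<bar>"
  have "?P (SOME L. ?P L)"
    using someI_ex[OF lip[OF assms(1)]] .
  then have "\<bar>GG \<gamma> g k x - GG \<gamma> g k y\<bar> \<le> (SOME L. ?P L) * \<bar>x - y\<bar>"
    using assms by blast
  also have "\<dots> \<le> lip_const a * \<bar>x - y\<bar>"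
    unfolding lip_const_def by (intro mult_right_mono) auto
  finally show ?thesis .
qed

lemma abs_GG_le:
  assumes "a \<ge> 0" "k \<ge> 1" "x \<in> {0..a}"
  shows "\<bar>GG \<gamma> g k x\<bar> \<le> lip_const a * x"
  using GG_lipschitz[OF assms, of 0] assms GG_zero[of g k \<gamma>, OF pgf] by simp

definition lower_slope :: real where
  "lower_slope = exp 1 * lip_const 1"

lemma lower_slope_nonneg: "lower_slope \<ge> 0"
  by (simp add: lower_slope_def lip_const_nonneg)

lemma GG_ge_lower_slope:
  assumes "k \<ge> 1" "z \<ge> 0"
  shows "GG \<gamma> g k z \<ge> - lower_slope * z"
  unfolding lower_slope_def
proof (rule GG_lower_bound[OF pgf assms(1) gamma_pos lip_const_nonneg _ assms(2)])
  fix h :: real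
  assume "h \<in> {0..1}"
  then show "GG \<gamma> g k h \<ge> - lip_const 1 * h"
    using abs_GG_le[of 1 k h] assms(1) by simp
qed

text \<open>\<open>v\<^sub>k(t, \<lambda>) \<le> vbound a\<close> for \<open>t, \<lambda> \<in> [0, a]\<close>: at most \<open>\<gamma>\<^sub>k a\<close> steps, each growing
  by a factor at most \<open>1 + 2 e lower_slope / \<gamma>\<^sub>k\<close>.\<close>
definition vbound :: "real \<Rightarrow> real" where
  "vbound a = a * exp (2 * exp 1 * lower_slope * a)"

definition vlip :: "real \<Rightarrow> real" where
  "vlip a = lip_const (vbound a)"

text \<open>\<open>step_error\<close> bounds one step against the Euler step; \<open>scheme_error\<close> adds up at most
  \<open>\<gamma>\<^sub>k a\<close> of them and the final fractional step.\<close>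
definition step_error :: "real \<Rightarrow> nat \<Rightarrow> real" where
  "step_error a k = 2 * (exp 1 * vlip a * vbound a)^2 / (real k * \<gamma> k ^ 2)
                    + vlip a * vbound a * (exp (vbound a / real k) - 1) / \<gamma> k"

definition scheme_error :: "real \<Rightarrow> nat \<Rightarrow> real" where
  "scheme_error a k = a * \<gamma> k * step_error a k + vlip a * vbound a / \<gamma> k"

definition large_index :: "real \<Rightarrow> nat \<Rightarrow> bool" where
  "large_index a k \<longleftrightarrow> k \<ge> 1 \<and> vbound a \<le> real k \<and> exp 1 * vlip a * vbound a / (real k * \<gamma> k) \<le> 1/2"

lemma vbound_ge: "a \<ge> 0 \<Longrightarrow> vbound a \<ge> a"
  unfolding vbound_def using lower_slope_nonneg by (simp add: mult_le_cancel_left1)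

lemma vlip_nonneg: "vlip a \<ge> 0"
  by (simp add: vlip_def lip_const_nonneg)

lemma eventually_large_index:
  assumes a: "a \<ge> 0"
  shows "eventually (large_index a) sequentially"
proof -
  define X where "X = exp 1 * vlip a * vbound a"
  have X: "X \<ge> 0"
    using vlip_nonneg vbound_ge[OF a] a by (simp add: X_def)
  have "eventually (\<lambda>k. k \<ge> nat \<lceil>vbound a\<rceil> + 1) sequentially"
    by (rule eventually_ge_at_top)
  moreover have "eventually (\<lambda>k. 2 * X + 1 \<le> \<gamma> k) sequentially"
    using gamma_lim by (simp add: filterlim_at_top)
  ultimately show ?thesis
  proof eventually_elim
    case (elim k)
    have kB: "vbound a \<le> real k"
      using elim(1) real_nat_ceiling_ge[of "vbound a"] by linarith
    have "X / (real k * \<gamma> k) \<le> X / \<gamma> k"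
      using elim(1) gamma_pos[of k] X by (intro divide_left_mono) (auto simp: mult_le_cancel_right1)
    also have "X / \<gamma> k \<le> 1/2"
      using elim(2) gamma_pos[of k] X by (simp add: divide_le_eq)
    finally show ?case
      using elim(1) kB by (simp add: large_index_def X_def)
  qed
qed

lemma scheme_error_tendsto_zero: "scheme_error a \<longlonglongrightarrow> 0"
proof -
  define X where "X = exp 1 * vlip a * vbound a"
  have eq: "scheme_error a k = a * (2 * X^2 * inverse (real k * \<gamma> k))
      + a * (vlip a * vbound a) * (exp (vbound a / real k) - 1) + vlip a * vbound a * inverse (\<gamma> k)" for k
    using gamma_pos[of k] unfolding scheme_error_def step_error_def X_def
    by (simp add: field_simps power2_eq_square)
  have "(\<lambda>k. inverse (real k * \<gamma> k)) \<longlonglongrightarrow> 0"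
    by (rule tendsto_inverse_0_at_top[OF filterlim_at_top_mult_at_top[OF filterlim_real_sequentially gamma_lim]])
  moreover have "(\<lambda>k. inverse (\<gamma> k)) \<longlonglongrightarrow> 0"
    by (rule tendsto_inverse_0_at_top[OF gamma_lim])
  moreover have "(\<lambda>k. exp (vbound a / real k)) \<longlonglongrightarrow> exp 0"
    by (intro tendsto_intros lim_const_over_n)
  ultimately have "(\<lambda>k. a * (2 * X^2 * inverse (real k * \<gamma> k))
      + a * (vlip a * vbound a) * (exp (vbound a / real k) - 1) + vlip a * vbound a * inverse (\<gamma> k))
      \<longlonglongrightarrow> a * (2 * X^2 * 0) + a * (vlip a * vbound a) * (exp 0 - 1) + vlip a * vbound a * 0"
    by (intro tendsto_intros)
  then show ?thesis
    unfolding eq by simp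
qed

lemma abs_GG_le_vbound:
  assumes a: "a \<ge> 0" and k: "k \<ge> 1" and u: "u \<in> {0..vbound a}"
  shows "\<bar>GG \<gamma> g k u\<bar> \<le> vlip a * vbound a"
proof -
  have "\<bar>GG \<gamma> g k u\<bar> \<le> vlip a * u"
    using abs_GG_le[OF _ k u] vbound_ge[OF a] a by (simp add: vlip_def)
  also have "\<dots> \<le> vlip a * vbound a"
    using u vlip_nonneg by (intro mult_left_mono) auto
  finally show ?thesis .
qed

lemma log_step_error_le:
  assumes a: "a \<ge> 0" and k: "large_index a k" and u: "u \<in> {0..vbound a}"
  shows "\<bar>log_step g k u - u + GG \<gamma> g k u / \<gamma> k\<bar> \<le> step_error a k"
proof -
  define M where "M = vlip a * vbound a"
  have k1: "k \<ge> 1" and uk: "u \<le> real k" and small: "exp 1 * M / (real k * \<gamma> k) \<le> 1/2"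
    using k u by (auto simp: large_index_def M_def mult.assoc)
  have M: "\<bar>GG \<gamma> g k u\<bar> \<le> M"
    using abs_GG_le_vbound[OF a k1 u] by (simp add: M_def)
  have "\<bar>log_step g k u - u + GG \<gamma> g k u / \<gamma> k\<bar>
        \<le> 2 * (exp 1 * M)^2 / (k * \<gamma> k ^ 2) + M * (exp (u / k) - 1) / \<gamma> k"
    using u uk by (intro log_step_error[OF pgf k1 gamma_pos _ _ M small]) auto
  also have "M * (exp (u / k) - 1) / \<gamma> k \<le> M * (exp (vbound a / k) - 1) / \<gamma> k"
    using u k1 gamma_pos[of k] vlip_nonneg vbound_ge[OF a] a
    by (intro divide_right_mono mult_left_mono) (auto simp: M_def divide_right_mono)
  finally show ?thesis
    by (simp add: step_error_def M_def mult.assoc)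
qed

lemma log_step_le:
  assumes a: "a \<ge> 0" and k: "large_index a k" and u: "u \<in> {0..vbound a}"
  shows "log_step g k u \<le> u * (1 + 2 * exp 1 * lower_slope / \<gamma> k)"
proof -
  define M where "M = vlip a * vbound a"
  have k1: "k \<ge> 1" and uk: "u \<le> real k" and small: "exp 1 * M / (real k * \<gamma> k) \<le> 1/2"
    using k u by (auto simp: large_index_def M_def mult.assoc)
  have M: "\<bar>GG \<gamma> g k u\<bar> \<le> M"
    using abs_GG_le_vbound[OF a k1 u] by (simp add: M_def)
  have "log_step g k u \<le> u + 2 * exp 1 * lower_slope * u / \<gamma> k"
    using u uk GG_ge_lower_slope[OF k1, of u]
    by (intro log_step_upper[OF pgf k1 gamma_pos _ _ M small lower_slope_nonneg]) auto
  then show ?thesis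
    by (simp add: algebra_simps)
qed

lemma growth_le_vbound:
  assumes a: "a \<ge> 0" and j: "real j \<le> \<gamma> k * a"
  shows "a * (1 + 2 * exp 1 * lower_slope / \<gamma> k) ^ j \<le> vbound a"
proof -
  define C where "C = 2 * exp 1 * lower_slope"
  have C: "C \<ge> 0" and \<gamma>: "\<gamma> k > 0"
    using lower_slope_nonneg gamma_pos by (auto simp: C_def)
  have "(1 + C / \<gamma> k) ^ j \<le> exp (C / \<gamma> k) ^ j"
    using C \<gamma> by (intro power_mono) (auto simp: exp_ge_add_one_self)
  also have "\<dots> = exp (C * (real j / \<gamma> k))"
    by (simp add: exp_of_nat2_mult[symmetric])
  also have "\<dots> \<le> exp (C * a)"
  proof -
    have "real j / \<gamma> k \<le> a"
      using j \<gamma> by (simp add: divide_le_eq mult.commute)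
    then have "C * (real j / \<gamma> k) \<le> C * a"
      by (rule mult_left_mono[OF _ C])
    then show ?thesis
      by simp
  qed
  finally show ?thesis
    using a by (simp add: vbound_def C_def mult_left_mono mult.assoc)
qed

lemma log_step_iterate_in_vbound:
  assumes a: "a \<ge> 0" and k: "large_index a k" and l: "l \<in> {0..a}" and j: "real j \<le> \<gamma> k * a"
  shows "(log_step g k ^^ j) l \<in> {0..vbound a}"
proof -
  define u where "u j = (log_step g k ^^ j) l" for j
  define q where "q = 1 + 2 * exp 1 * lower_slope / \<gamma> k"
  have k1: "k \<ge> 1"
    using k by (simp add: large_index_def)
  have u0: "u j \<ge> 0" for j
    using pgf_iterate_eq_exp_log_step[of g k l j, OF pgf k1] l by (simp add: u_def)
  have q: "q \<ge> 0"
    using lower_slope_nonneg gamma_pos[of k] by (simp add: q_def)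
  have "real j \<le> \<gamma> k * a \<Longrightarrow> u j \<le> a * q ^ j" for j
  proof (induction j)
    case 0
    then show ?case
      using l by (simp add: u_def)
  next
    case (Suc j)
    then have uj: "u j \<le> a * q ^ j" and "a * q ^ j \<le> vbound a"
      using growth_le_vbound[OF a, of j k] by (simp_all add: q_def)
    then have "u (Suc j) \<le> u j * q"
      using log_step_le[OF a k, of "u j"] u0 by (simp add: u_def q_def)
    also have "\<dots> \<le> a * q ^ j * q"
      by (rule mult_right_mono[OF uj q])
    finally show ?case
      by (simp add: ac_simps)
  qed
  then show ?thesis
    using u0 growth_le_vbound[OF a j] j by (fastforce simp: u_def q_def)
qed

lemma steps_le:
  assumes s: "s \<in> {0..a}"
  shows "real (nat \<lfloor>\<gamma> k * s\<rfloor>) \<le> \<gamma> k * a"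
proof -
  have "real (nat \<lfloor>\<gamma> k * s\<rfloor>) \<le> \<gamma> k * s"
    using s by (intro nat_floor_mult_bounds(1)[OF gamma_pos]) auto
  also have "\<dots> \<le> \<gamma> k * a"
    using s gamma_pos[of k] by (intro mult_left_mono) auto
  finally show ?thesis .
qed

lemma vv_in_vbound:
  assumes a: "a \<ge> 0" and k: "large_index a k" and l: "l \<in> {0..a}" and s: "s \<in> {0..a}"
  shows "vv \<gamma> g k s l \<in> {0..vbound a}"
proof -
  have k1: "k \<ge> 1"
    using k by (simp add: large_index_def)
  show ?thesis
    using vv_eq_log_step_iterate[of g k l \<gamma> s, OF pgf k1] log_step_iterate_in_vbound[OF a k l]
      steps_le[OF s] l by simp
qed

lemma log_step_iterate_sum_error:
  assumes a: "a \<ge> 0" and k: "large_index a k" and l: "l \<in> {0..a}" and n: "real n \<le> \<gamma> k * a"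
  shows "\<bar>(log_step g k ^^ n) l - (l - (\<Sum>j<n. GG \<gamma> g k ((log_step g k ^^ j) l) / \<gamma> k))\<bar>
           \<le> real n * step_error a k"
  using n
proof (induction n)
  case 0
  then show ?case by simp
next
  case (Suc n)
  define u where "u j = (log_step g k ^^ j) l" for j
  have n: "real n \<le> \<gamma> k * a"
    using Suc.prems by simp
  have "\<bar>u (Suc n) - u n + GG \<gamma> g k (u n) / \<gamma> k\<bar> \<le> step_error a k"
    using log_step_error_le[OF a k log_step_iterate_in_vbound[OF a k l n]] by (simp add: u_def)
  moreover have "u (Suc n) - (l - (\<Sum>j<Suc n. GG \<gamma> g k (u j) / \<gamma> k))
      = (u n - (l - (\<Sum>j<n. GG \<gamma> g k (u j) / \<gamma> k))) + (u (Suc n) - u n + GG \<gamma> g k (u n) / \<gamma> k)"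
    by simp
  ultimately show ?case
    using Suc.IH[OF n] by (simp add: u_def algebra_simps)
qed

lemma vv_integrable:
  assumes "k \<ge> 1" "l \<ge> 0" "t \<ge> 0"
  shows "(\<lambda>s. vv \<gamma> g k s l) integrable_on {0..t}"
    and "(\<lambda>s. GG \<gamma> g k (vv \<gamma> g k s l)) integrable_on {0..t}"
  using floor_step_integrable[OF gamma_pos assms(3)]
  by (simp_all add: vv_eq_log_step_iterate[of g k l, OF pgf assms(1,2)])

lemma vv_integral_error:
  assumes a: "a \<ge> 0" and k: "large_index a k" and l: "l \<in> {0..a}" and t: "t \<in> {0..a}"
  shows "\<bar>vv \<gamma> g k t l - (l - integral {0..t} (\<lambda>s. GG \<gamma> g k (vv \<gamma> g k s l)))\<bar> \<le> scheme_error a k"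
proof -
  define u where "u j = (log_step g k ^^ j) l" for j
  define G where "G j = GG \<gamma> g k (u j)" for j
  define n where "n = nat \<lfloor>\<gamma> k * t\<rfloor>"
  have k1: "k \<ge> 1"
    using k by (simp add: large_index_def)
  have vv: "vv \<gamma> g k s l = u (nat \<lfloor>\<gamma> k * s\<rfloor>)" for s
    using vv_eq_log_step_iterate[of g k l, OF pgf k1] l by (simp add: u_def)
  have n: "real n \<le> \<gamma> k * a"
    using steps_le[OF t] by (simp add: n_def)
  have frac: "t - real n / \<gamma> k \<in> {0..1 / \<gamma> k}"
    using nat_floor_mult_bounds(2)[OF gamma_pos, of t k] t by (simp add: n_def)
  have "integral {0..t} (\<lambda>s. GG \<gamma> g k (vv \<gamma> g k s l)) = (\<Sum>j<n. G j) / \<gamma> k + (t - real n / \<gamma> k) * G n"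
    using has_integral_floor_step[OF gamma_pos, of t G k] t by (simp add: vv G_def n_def integral_unique)
  then have "vv \<gamma> g k t l - (l - integral {0..t} (\<lambda>s. GG \<gamma> g k (vv \<gamma> g k s l)))
      = (u n - (l - (\<Sum>j<n. G j / \<gamma> k))) + (t - real n / \<gamma> k) * G n"
    by (simp add: vv n_def sum_divide_distrib)
  also have "\<bar>\<dots>\<bar> \<le> real n * step_error a k + 1 / \<gamma> k * (vlip a * vbound a)"
  proof (rule order.trans[OF abs_triangle_ineq add_mono])
    show "\<bar>u n - (l - (\<Sum>j<n. G j / \<gamma> k))\<bar> \<le> real n * step_error a k"
      using log_step_iterate_sum_error[OF a k l n] by (simp add: u_def G_def)
    show "\<bar>(t - real n / \<gamma> k) * G n\<bar> \<le> 1 / \<gamma> k * (vlip a * vbound a)"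
      unfolding abs_mult using frac abs_GG_le_vbound[OF a k1 log_step_iterate_in_vbound[OF a k l n]]
      using gamma_pos[of k] by (intro mult_mono) (auto simp: G_def u_def)
  qed
  also have "\<dots> \<le> scheme_error a k"
  proof -
    have "step_error a k \<ge> 0"
      using vlip_nonneg vbound_ge[OF a] a k1 gamma_pos[of k] by (simp add: step_error_def)
    with n have "real n * step_error a k \<le> \<gamma> k * a * step_error a k"
      by (rule mult_right_mono)
    then show ?thesis
      by (simp add: scheme_error_def mult_ac)
  qed
  finally show ?thesis .
qed

lemma abs_vv_diff_integrable:
  assumes a: "a \<ge> 0" and m: "large_index a m" and n: "large_index a n"
    and l: "l \<in> {0..a}" and t: "t \<in> {0..a}"
  shows "(\<lambda>s. \<bar>vv \<gamma> g m s l - vv \<gamma> g n s l\<bar>) integrable_on {0..t}"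
proof (rule abs_integrable_of_bounded)
  show "(\<lambda>s. vv \<gamma> g m s l - vv \<gamma> g n s l) integrable_on {0..t}"
    using m n l t by (intro integrable_diff vv_integrable(1)) (auto simp: large_index_def)
  fix s
  assume "s \<in> {0..t}"
  then have "vv \<gamma> g m s l \<in> {0..vbound a}" "vv \<gamma> g n s l \<in> {0..vbound a}"
    using vv_in_vbound[OF a m l] vv_in_vbound[OF a n l] t by auto
  then show "\<bar>vv \<gamma> g m s l - vv \<gamma> g n s l\<bar> \<le> vbound a"
    by (auto simp: abs_le_iff)
qed

lemma vv_diff_integral_ineq:
  assumes a: "a \<ge> 0" and m: "large_index a m" and n: "large_index a n"
    and l: "l \<in> {0..a}" and t: "t \<in> {0..a}" and \<eta>: "\<eta> \<ge> 0"
    and err: "scheme_error a m \<le> \<eta>" "scheme_error a n \<le> \<eta>"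
    and close: "\<And>k x. k \<in> {m, n} \<Longrightarrow> x \<in> {0..vbound a} \<Longrightarrow> \<bar>GG \<gamma> g k x - \<phi> x\<bar> \<le> \<eta>"
  shows "\<bar>vv \<gamma> g m t l - vv \<gamma> g n t l\<bar>
           \<le> 2 * \<eta> + 2 * \<eta> * a + vlip a * integral {0..t} (\<lambda>s. \<bar>vv \<gamma> g m s l - vv \<gamma> g n s l\<bar>)"
proof -
  define f where "f s = \<bar>vv \<gamma> g m s l - vv \<gamma> g n s l\<bar>" for s
  define D where "D s = GG \<gamma> g n (vv \<gamma> g n s l) - GG \<gamma> g m (vv \<gamma> g m s l)" for s
  have m1: "m \<ge> 1" and n1: "n \<ge> 1"
    using m n by (simp_all add: large_index_def)
  have t0: "t \<ge> 0" and l0: "l \<ge> 0"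
    using t l by auto
  have w: "vv \<gamma> g m s l \<in> {0..vbound a}" "vv \<gamma> g n s l \<in> {0..vbound a}" if "s \<in> {0..t}" for s
    using vv_in_vbound[OF a m l] vv_in_vbound[OF a n l] that t by auto
  have f_int: "f integrable_on {0..t}"
    unfolding f_def by (rule abs_vv_diff_integrable[OF a m n l t])
  have D_int: "D integrable_on {0..t}"
    unfolding D_def by (intro integrable_diff vv_integrable(2) m1 n1 l0 t0)
  have D_le: "norm (D s) \<le> vlip a * f s + 2 * \<eta>" if s: "s \<in> {0..t}" for s
  proof -
    have "\<bar>GG \<gamma> g n (vv \<gamma> g n s l) - GG \<gamma> g n (vv \<gamma> g m s l)\<bar> \<le> vlip a * f s"
      using GG_lipschitz[OF _ n1 w(2)[OF s] w(1)[OF s]] vbound_ge[OF a] a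
      by (simp add: f_def vlip_def abs_minus_commute)
    moreover have "\<bar>GG \<gamma> g m (vv \<gamma> g m s l) - \<phi> (vv \<gamma> g m s l)\<bar> \<le> \<eta>"
      and "\<bar>GG \<gamma> g n (vv \<gamma> g m s l) - \<phi> (vv \<gamma> g m s l)\<bar> \<le> \<eta>"
      using close w(1)[OF s] by auto
    ultimately show ?thesis
      unfolding D_def real_norm_def by (auto simp: abs_le_iff)
  qed
  have bound_int: "(\<lambda>s. vlip a * f s + 2 * \<eta>) integrable_on {0..t}"
    using integrable_add[OF integrable_on_cmult_left[OF f_int, of "vlip a"] integrable_const_ivl] by simp
  have "\<bar>integral {0..t} D\<bar> \<le> integral {0..t} (\<lambda>s. vlip a * f s + 2 * \<eta>)"
    using integral_norm_bound_integral[OF D_int bound_int D_le] by simp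
  also have "\<dots> = vlip a * integral {0..t} f + 2 * \<eta> * t"
    using integral_add[OF integrable_on_cmult_left[OF f_int, of "vlip a"] integrable_const_ivl[of "2 * \<eta>" 0 t]] t0
    by simp
  also have "\<dots> \<le> vlip a * integral {0..t} f + 2 * \<eta> * a"
    using t \<eta> by (simp add: mult_left_mono)
  finally have "\<bar>integral {0..t} D\<bar> \<le> vlip a * integral {0..t} f + 2 * \<eta> * a" .
  moreover have "integral {0..t} D = integral {0..t} (\<lambda>s. GG \<gamma> g n (vv \<gamma> g n s l))
                                     - integral {0..t} (\<lambda>s. GG \<gamma> g m (vv \<gamma> g m s l))"
    unfolding D_def by (intro integral_diff vv_integrable(2) m1 n1 l0 t0)
  ultimately show ?thesis
    using vv_integral_error[OF a m l t] vv_integral_error[OF a n l t] err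
    unfolding f_def by linarith
qed

lemma uniformly_Cauchy_vv:
  assumes a: "a \<ge> 0"
  shows "uniformly_Cauchy_on ({0..a} \<times> {0..a}) (\<lambda>k (t, l). vv \<gamma> g k t l)"
proof (rule uniformly_Cauchy_onI)
  fix \<epsilon> :: real
  assume \<epsilon>: "\<epsilon> > 0"
  define \<Lambda> where "\<Lambda> = exp (vlip a * a)"
  define \<eta> where "\<eta> = \<epsilon> / (4 * (a + 1) * \<Lambda>)"
  have \<Lambda>: "\<Lambda> > 0" and \<eta>: "\<eta> > 0"
    using \<epsilon> a by (simp_all add: \<Lambda>_def \<eta>_def)
  have "eventually (\<lambda>k. dist (scheme_error a k) 0 < \<eta>) sequentially"
    using scheme_error_tendsto_zero \<eta> by (rule tendstoD)
  moreover have "eventually (\<lambda>k. \<forall>x\<in>{0..vbound a}. dist (GG \<gamma> g k x) (\<phi> x) < \<eta>) sequentially"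
    using uniform_limitD[OF conv \<eta>] vbound_ge[OF a] a by simp
  ultimately have "eventually (\<lambda>k. large_index a k \<and> scheme_error a k \<le> \<eta>
                      \<and> (\<forall>x\<in>{0..vbound a}. \<bar>GG \<gamma> g k x - \<phi> x\<bar> \<le> \<eta>)) sequentially"
    using eventually_large_index[OF a] by eventually_elim (auto simp: dist_real_def)
  then obtain N where N: "\<And>k. k \<ge> N \<Longrightarrow> large_index a k \<and> scheme_error a k \<le> \<eta>
                      \<and> (\<forall>x\<in>{0..vbound a}. \<bar>GG \<gamma> g k x - \<phi> x\<bar> \<le> \<eta>)"
    unfolding eventually_sequentially by blast
  have "\<bar>vv \<gamma> g m t l - vv \<gamma> g n t l\<bar> < \<epsilon>"
    if mn: "m \<ge> N" "n \<ge> N" and t: "t \<in> {0..a}" and l: "l \<in> {0..a}" for m n t l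
  proof -
    define f where "f = (\<lambda>s. \<bar>vv \<gamma> g m s l - vv \<gamma> g n s l\<bar>)"
    define \<delta> where "\<delta> = 2 * \<eta> + 2 * \<eta> * a"
    have m: "large_index a m" and n: "large_index a n"
      and err: "scheme_error a m \<le> \<eta>" "scheme_error a n \<le> \<eta>"
      and close: "\<And>k x. k \<in> {m, n} \<Longrightarrow> x \<in> {0..vbound a} \<Longrightarrow> \<bar>GG \<gamma> g k x - \<phi> x\<bar> \<le> \<eta>"
      using N mn by auto
    have "f t \<le> \<delta> * exp (vlip a * t)"
    proof (rule gronwall_integral_le[OF a vlip_nonneg _ _ _ _ t])
      show "\<delta> \<ge> 0"
        using \<eta> a by (simp add: \<delta>_def)
      fix s
      assume s: "s \<in> {0..a}"
      have "vv \<gamma> g m s l \<in> {0..vbound a}" "vv \<gamma> g n s l \<in> {0..vbound a}"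
        using vv_in_vbound[OF a m l s] vv_in_vbound[OF a n l s] .
      then show "0 \<le> f s \<and> f s \<le> vbound a"
        by (auto simp: f_def abs_le_iff)
      show "f integrable_on {0..s}"
        unfolding f_def by (rule abs_vv_diff_integrable[OF a m n l s])
      show "f s \<le> \<delta> + vlip a * integral {0..s} f"
        using vv_diff_integral_ineq[OF a m n l s less_imp_le[OF \<eta>] err close]
        by (simp add: f_def \<delta>_def)
    qed
    also have "\<dots> \<le> \<delta> * \<Lambda>"
      using t \<eta> a vlip_nonneg unfolding \<Lambda>_def \<delta>_def by (auto intro!: mult_left_mono)
    also have "\<dots> = \<epsilon> / 2"
    proof -
      have "\<eta> * (4 * (a + 1) * \<Lambda>) = \<epsilon>"
        using \<Lambda> a by (simp add: \<eta>_def)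
      moreover have "\<delta> * \<Lambda> = \<eta> * (4 * (a + 1) * \<Lambda>) / 2"
        by (simp add: \<delta>_def algebra_simps)
      ultimately show ?thesis
        by simp
    qed
    also have "\<dots> < \<epsilon>"
      using \<epsilon> by simp
    finally show ?thesis
      by (simp add: f_def)
  qed
  then show "\<exists>M. \<forall>x\<in>{0..a} \<times> {0..a}. \<forall>m\<ge>M. \<forall>n\<ge>M.
               dist ((\<lambda>(t, l). vv \<gamma> g m t l) x) ((\<lambda>(t, l). vv \<gamma> g n t l) x) < \<epsilon>"
    by (auto simp: dist_real_def intro!: exI[of _ N])
qed

subsection \<open>The limit and its integral equation\<close>

definition vlim :: "real \<Rightarrow> real \<Rightarrow> real" where
  "vlim t l = lim (\<lambda>k. vv \<gamma> g k t l)"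

lemma vv_uniform_limit:
  assumes "a \<ge> 0"
  shows "uniform_limit ({0..a} \<times> {0..a}) (\<lambda>k (t, l). vv \<gamma> g k t l) (\<lambda>(t, l). vlim t l) sequentially"
proof -
  have "uniform_limit ({0..a} \<times> {0..a}) (\<lambda>k (t, l). vv \<gamma> g k t l)
          (\<lambda>x. lim (\<lambda>k. (\<lambda>(t, l). vv \<gamma> g k t l) x)) sequentially"
    using Cauchy_uniformly_convergent[OF uniformly_Cauchy_vv[OF assms]]
    by (simp add: uniformly_convergent_uniform_limit_iff)
  then show ?thesis
    by (simp add: vlim_def split_beta')
qed

lemma vv_tendsto_vlim:
  assumes "a \<ge> 0" "t \<in> {0..a}" "l \<in> {0..a}"
  shows "(\<lambda>k. vv \<gamma> g k t l) \<longlonglongrightarrow> vlim t l"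
  using tendsto_uniform_limitI[OF vv_uniform_limit[OF assms(1)], of "(t, l)"] assms(2,3) by simp

lemma vlim_in_vbound:
  assumes a: "a \<ge> 0" and s: "s \<in> {0..a}" and l: "l \<in> {0..a}"
  shows "vlim s l \<in> {0..vbound a}"
proof -
  have "eventually (\<lambda>k. vv \<gamma> g k s l \<in> {0..vbound a}) sequentially"
    using eventually_large_index[OF a] by eventually_elim (rule vv_in_vbound[OF a _ l s])
  then show ?thesis
    using vv_tendsto_vlim[OF a s l] closed_atLeastAtMost by (metis Lim_in_closed_set trivial_limit_sequentially)
qed

lemma phi_lipschitz:
  assumes a: "a \<ge> 0"
  shows "(lip_const a)-lipschitz_on {0..a} \<phi>"
proof (rule lipschitz_onI[OF _ lip_const_nonneg])
  fix x y
  assume xy: "x \<in> {0..a}" "y \<in> {0..a}"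
  have "(\<lambda>k. \<bar>GG \<gamma> g k x - GG \<gamma> g k y\<bar>) \<longlonglongrightarrow> \<bar>\<phi> x - \<phi> y\<bar>"
    using xy by (intro tendsto_intros tendsto_uniform_limitI[OF conv[OF a]])
  moreover have "\<exists>N. \<forall>k\<ge>N. \<bar>GG \<gamma> g k x - GG \<gamma> g k y\<bar> \<le> lip_const a * \<bar>x - y\<bar>"
    using GG_lipschitz[OF a _ xy] by blast
  ultimately show "dist (\<phi> x) (\<phi> y) \<le> lip_const a * dist x y"
    unfolding dist_real_def by (rule LIMSEQ_le_const2)
qed

lemma GG_vv_uniform_limit:
  assumes a: "a \<ge> 0" and l: "l \<in> {0..a}"
  shows "uniform_limit {0..a} (\<lambda>k s. GG \<gamma> g k (vv \<gamma> g k s l)) (\<lambda>s. \<phi> (vlim s l)) sequentially"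
proof -
  have B: "vbound a \<ge> 0"
    using vbound_ge[OF a] a by simp
  have in_B: "eventually (\<lambda>k. (\<lambda>s. vv \<gamma> g k s l) ` {0..a} \<subseteq> {0..vbound a}) sequentially"
    using eventually_large_index[OF a] by eventually_elim (use vv_in_vbound[OF a _ l] in auto)
  have "uniform_limit {0..a} (\<lambda>k s. vv \<gamma> g k s l) (\<lambda>s. vlim s l) sequentially"
    using uniform_limit_compose'[OF vv_uniform_limit[OF a], of "\<lambda>s. (s, l)" "{0..a}"] l by auto
  moreover have "uniformly_continuous_on {0..vbound a} \<phi>"
    by (rule lipschitz_on_uniformly_continuous[OF phi_lipschitz[OF B]])
  ultimately have "uniform_limit {0..a} (\<lambda>k s. \<phi> (vv \<gamma> g k s l)) (\<phi> \<circ> (\<lambda>s. vlim s l)) sequentially"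
    using vlim_in_vbound[OF a _ l] in_B by (intro uniform_limit_compose) auto
  moreover have "uniform_limit {0..a} (\<lambda>k s. GG \<gamma> g k (vv \<gamma> g k s l) - \<phi> (vv \<gamma> g k s l)) (\<lambda>s. 0) sequentially"
  proof (rule uniform_limitI)
    fix e :: real
    assume "e > 0"
    with in_B uniform_limitD[OF conv[OF B]]
    show "eventually (\<lambda>k. \<forall>s\<in>{0..a}.
                dist (GG \<gamma> g k (vv \<gamma> g k s l) - \<phi> (vv \<gamma> g k s l)) 0 < e) sequentially"
      by (fastforce elim: eventually_elim2 simp: dist_real_def)
  qed
  ultimately have "uniform_limit {0..a} (\<lambda>k s. \<phi> (vv \<gamma> g k s l) + (GG \<gamma> g k (vv \<gamma> g k s l) - \<phi> (vv \<gamma> g k s l)))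
                     (\<lambda>s. (\<phi> \<circ> (\<lambda>s. vlim s l)) s + 0) sequentially"
    by (rule uniform_limit_add)
  then show ?thesis
    by simp
qed

lemma vlim_integral_equation:
  assumes t: "t \<ge> 0" and l: "l \<ge> 0"
  shows "(\<lambda>s. \<phi> (vlim s l)) integrable_on {0..t} \<and> vlim t l = l - integral {0..t} (\<lambda>s. \<phi> (vlim s l))"
proof -
  define a where "a = max t l"
  define J where "J k = integral {0..t} (\<lambda>s. GG \<gamma> g k (vv \<gamma> g k s l))" for k
  have a: "a \<ge> 0" and ta: "t \<in> {0..a}" and la: "l \<in> {0..a}"
    using t l by (auto simp: a_def)
  have lim: "uniform_limit {0..t} (\<lambda>k s. GG \<gamma> g k (vv \<gamma> g k s l)) (\<lambda>s. \<phi> (vlim s l)) sequentially"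
    using ta by (intro uniform_limit_on_subset[OF GG_vv_uniform_limit[OF a la]]) auto
  have int: "eventually (\<lambda>k. (\<lambda>s. GG \<gamma> g k (vv \<gamma> g k s l)) integrable_on {0..t}) sequentially"
    using eventually_ge_at_top[of 1] by eventually_elim (rule vv_integrable(2)[OF _ l t])
  have "(\<lambda>k. vv \<gamma> g k t l - (l - J k)) \<longlonglongrightarrow> 0"
  proof (rule Lim_null_comparison[OF _ scheme_error_tendsto_zero])
    show "eventually (\<lambda>k. norm (vv \<gamma> g k t l - (l - J k)) \<le> scheme_error a k) sequentially"
      using eventually_large_index[OF a] by eventually_elim (simp add: J_def vv_integral_error[OF a _ la ta])
  qed
  moreover have "J \<longlonglongrightarrow> integral {0..t} (\<lambda>s. \<phi> (vlim s l))"
    unfolding J_def by (rule integral_uniform_limit_sequentially[OF lim int])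
  ultimately have "(\<lambda>k. (vv \<gamma> g k t l - (l - J k)) + (l - J k)) \<longlonglongrightarrow> 0 + (l - integral {0..t} (\<lambda>s. \<phi> (vlim s l)))"
    by (intro tendsto_intros)
  then have "vlim t l = l - integral {0..t} (\<lambda>s. \<phi> (vlim s l))"
    using vv_tendsto_vlim[OF a ta la] LIMSEQ_unique by force
  then show ?thesis
    using integrable_uniform_limit_sequentially[OF lim int] by simp
qed

end

theorem theorem2p1p6:
  fixes \<gamma> :: "nat \<Rightarrow> real" and g :: "nat \<Rightarrow> real \<Rightarrow> real" and \<phi> :: "real \<Rightarrow> real"
  assumes gamma_pos: "\<And>k. \<gamma> k > 0"
    and gamma_lim: "filterlim \<gamma> at_top sequentially"
    and pgf: "\<And>k. is_pgf (g k)"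
    and lip: "\<And>a. a \<ge> 0 \<Longrightarrow> \<exists>L. \<forall>k\<ge>1. \<forall>x\<in>{0..a}. \<forall>y\<in>{0..a}.
                 \<bar>GG \<gamma> g k x - GG \<gamma> g k y\<bar> \<le> L * \<bar>x - y\<bar>"
    and conv: "\<And>a. a \<ge> 0 \<Longrightarrow> uniform_limit {0..a} (GG \<gamma> g) \<phi> sequentially"
  shows "\<exists>v :: real \<Rightarrow> real \<Rightarrow> real.
           (\<forall>a\<ge>0. uniform_limit ({0..a} \<times> {0..a}) (\<lambda>k (t, l). vv \<gamma> g k t l)
                      (\<lambda>(t, l). v t l) sequentially) \<and>
           (\<forall>t\<ge>0. \<forall>l\<ge>0. (\<lambda>s. \<phi> (v s l)) integrable_on {0..t} \<and>
                      v t l = l - integral {0..t} (\<lambda>s. \<phi> (v s l)))"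
proof -
  interpret pgf_rescaling \<gamma> g \<phi>
    using gamma_pos gamma_lim pgf lip conv by unfold_locales
  show ?thesis
    using vv_uniform_limit vlim_integral_equation by blast
qed

end
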